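(* Let $\boldsymbol{\varphi}:\mathbb{R}^D\to\mathbb{R}^Y$ be a random feature map utilizing $Y$ random projections $\{\varphi_\alpha\}_{\alpha=1}^Y$, and let $\boldsymbol{\xi}^1,\dots,\boldsymbol{\xi}^K\in\mathbb{R}^D$ be $K$ memories. The random-feature based Distributed-representation Dense Associative Memory (DrDAM), implemented as described in the context (first ProcMems to form $\mathbf{T}$, then $L$ gradient steps each computed by GradComp), takes $O\big(D(YK+L(Y+D))\big)$ time and $O(Y+D)$ peak memory to perform $L$ energy gradient descent steps $\mathbf{x}^{(t)}=\mathbf{x}^{(t-1)}-\eta^{(t-1)}\nabla_{\mathbf{x}}\hat E(\mathbf{x}^{(t-1)})$, $t=1,\dots,L$, with the random-feature based approximate gradient $\nabla_{\mathbf{x}}\hat E$.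
   Context: Setting: $\mathbf{g}:\mathbb{R}^D\to\mathbb{R}^D$ is a differentiable vector function, $Q$ a differentiable scalar function, $\eta^{(t)}>0$ step sizes. Each random feature $\varphi_\alpha$ is determined by a random projection vector $\boldsymbol{\omega}^\alpha\in\mathbb{R}^D$ and evaluated as a scalar function of $\langle\boldsymbol{\omega}^\alpha,\mathbf{x}\rangle$; the random vectors are generated from a random number generator with fixed seed $\tau$ and regenerated on demand. The distributed memory is $\mathbf{T}=\sum_{\mu=1}^K\boldsymbol{\varphi}(\boldsymbol{\xi}^\mu)\in\mathbb{R}^Y$, the approximate energy is $\hat E(\mathbf{x})=-Q(\langle\mathbf{T},\boldsymbol{\varphi}(\mathbf{g}(\mathbf{x}))\rangle)$ with gradient $\nabla_{\mathbf{x}}\hat E = -Q'(\langle\boldsymbol{\varphi}(\mathbf{g}(\mathbf{x})),\mathbf{T}\rangle)\big(\frac{d\boldsymbol{\varphi}(\mathbf{z})}{d\mathbf{z}}\big|_{\mathbf{z}=\mathbf{g}(\mathbf{x})}^\top\mathbf{T}\big)\frac{d\mathbf{g}(\mathbf{x})}{d\mathbf{x}}$. Subroutines: RF$(\tau,\boldsymbol{\xi})$ resets the generator to seed $\tau$ and, for $\alpha=1,\dots,Y$, samples $\varphi_\alpha$ and sets $p_\alpha\gets\varphi_\alpha(\boldsymbol{\xi})$, returning $\mathbf{p}$. ProcMems: $\mathbf{T}\gets 0_Y$, then for each $\mu$, $\mathbf{T}\gets\mathbf{T}+\mathrm{RF}(\tau,\boldsymbol{\xi}^\mu)$. GradComp$(\tau,\mathbf{T},\mathbf{x})$: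 $\mathbf{p}\gets\mathrm{RF}(\tau,\mathbf{g}(\mathbf{x}))$; for $i=1..D$, $z_i\gets\langle \partial\boldsymbol{\varphi}(\mathbf{y})/\partial y_i|_{\mathbf{y}=\mathbf{g}(\mathbf{x})},\mathbf{T}\rangle$; for $i=1..D$, $z'_i\gets\langle\partial\mathbf{g}(\mathbf{x})/\partial x_i,\mathbf{z}\rangle$; return $-Q'(\langle\mathbf{T},\mathbf{p}\rangle)\,\mathbf{z}'$. Complexity counts arithmetic operations and stored real numbers, with sampling a scalar random number, evaluating scalar elementary functions, and evaluating an entry of $\mathbf{g}$ or its Jacobian at unit cost. *)

theory Defs
  imports Complex_Main "HOL-Library.Monad_Syntax"
begin

text \<open>State of the abstract machine: elapsed time (number of unit-cost operations),
  currently live stored reals, peak number of live stored reals, and the state of the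
  seeded random number generator (current seed and position in its stream).\<close>

record cst =
  tm   :: nat
  live :: nat
  peak :: nat
  seed :: nat
  pos  :: nat

type_synonym 'a M = "cst \<Rightarrow> 'a \<times> cst"

definition init_st :: cst where
  "init_st = \<lparr>tm = 0, live = 0, peak = 0, seed = 0, pos = 0\<rparr>"

definition retM :: "'a \<Rightarrow> 'a M" where
  "retM a = (\<lambda>s. (a, s))"

definition bindM :: "'a M \<Rightarrow> ('a \<Rightarrow> 'b M) \<Rightarrow> 'b M" where
  "bindM m f = (\<lambda>s. case m s of (a, s') \<Rightarrow> f a s')"

adhoc_overloading Monad_Syntax.bind \<rightleftharpoons> bindM

definition tick :: "cst \<Rightarrow> cst" where
  "tick s = s\<lparr>tm := tm s + 1\<rparr>"

definition addM :: "real \<Rightarrow> real \<Rightarrow> real M" where "addM a b = (\<lambda>s. (a + b, tick s))"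
definition subM :: "real \<Rightarrow> real \<Rightarrow> real M" where "subM a b = (\<lambda>s. (a - b, tick s))"
definition mulM :: "real \<Rightarrow> real \<Rightarrow> real M" where "mulM a b = (\<lambda>s. (a * b, tick s))"
definition negM :: "real \<Rightarrow> real M" where "negM a = (\<lambda>s. (- a, tick s))"
definition elemM :: "(real \<Rightarrow> real) \<Rightarrow> real \<Rightarrow> real M" where
  "elemM f t = (\<lambda>s. (f t, tick s))"
definition gentM :: "((nat \<Rightarrow> real) \<Rightarrow> nat \<Rightarrow> real) \<Rightarrow> (nat \<Rightarrow> real) \<Rightarrow> nat \<Rightarrow> real M" where
  "gentM g x j = (\<lambda>s. (g x j, tick s))"
definition jentM :: "((nat \<Rightarrow> real) \<Rightarrow> nat \<Rightarrow> nat \<Rightarrow> real) \<Rightarrow> (nat \<Rightarrow> real) \<Rightarrow> nat \<Rightarrow> nat \<Rightarrow> real M" where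
  "jentM Jg x j i = (\<lambda>s. (Jg x j i, tick s))"

text \<open>The seeded generator: \<open>rng \<tau> k\<close> is the k-th number of the stream with seed \<open>\<tau>\<close>.\<close>
definition sampleM :: "(nat \<Rightarrow> nat \<Rightarrow> real) \<Rightarrow> real M" where
  "sampleM rng = (\<lambda>s. (rng (seed s) (pos s), (tick s)\<lparr>pos := pos s + 1\<rparr>))"
definition resetM :: "nat \<Rightarrow> unit M" where
  "resetM \<tau> = (\<lambda>s. ((), (tick s)\<lparr>seed := \<tau>, pos := 0\<rparr>))"

text \<open>Allocation of n reals (initialised, costing n time units) and freeing.\<close>
definition allocM :: "nat \<Rightarrow> unit M" where
  "allocM n = (\<lambda>s. ((), s\<lparr>tm := tm s + n, live := live s + n,
                          peak := max (peak s) (live s + n)\<rparr>))"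
definition freeM :: "nat \<Rightarrow> unit M" where
  "freeM n = (\<lambda>s. ((), s\<lparr>live := live s - n\<rparr>))"

primrec forM :: "nat list \<Rightarrow> (nat \<Rightarrow> 'a \<Rightarrow> 'a M) \<Rightarrow> 'a \<Rightarrow> 'a M" where
  "forM [] f a = retM a"
| "forM (i # is) f a = bindM (f i a) (forM is f)"

section \<open>The DrDAM algorithm (vectors are \<open>nat \<Rightarrow> real\<close>, indices 0-based)\<close>

definition sample_vec :: "(nat \<Rightarrow> nat \<Rightarrow> real) \<Rightarrow> nat \<Rightarrow> (nat \<Rightarrow> real) M" where
  "sample_vec rng D = forM [0..<D] (\<lambda>i w. do { r \<leftarrow> sampleM rng; retM (w(i := r)) }) (\<lambda>_. 0)"

definition dotp :: "nat \<Rightarrow> (nat \<Rightarrow> real) \<Rightarrow> (nat \<Rightarrow> real) \<Rightarrow> real M" where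
  "dotp n a b = forM [0..<n] (\<lambda>i acc. do { m \<leftarrow> mulM (a i) (b i); addM acc m }) 0"

text \<open>RF: feature alpha is \<open>s \<alpha> \<langle>\<omega>\<^sup>\<alpha>, \<xi>\<rangle>\<close>; returns p (Y reals, to be freed by the caller).\<close>
definition RF :: "(nat \<Rightarrow> nat \<Rightarrow> real) \<Rightarrow> nat \<Rightarrow> nat \<Rightarrow> (nat \<Rightarrow> real \<Rightarrow> real)
    \<Rightarrow> nat \<Rightarrow> (nat \<Rightarrow> real) \<Rightarrow> (nat \<Rightarrow> real) M" where
  "RF rng D Y s \<tau> \<xi> = do {
     resetM \<tau>; allocM Y; allocM D;
     p \<leftarrow> forM [0..<Y] (\<lambda>\<alpha> p. do {
            w \<leftarrow> sample_vec rng D;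
            u \<leftarrow> dotp D w \<xi>;
            v \<leftarrow> elemM (s \<alpha>) u;
            retM (p(\<alpha> := v)) }) (\<lambda>_. 0);
     freeM D;
     retM p }"

definition ProcMems :: "(nat \<Rightarrow> nat \<Rightarrow> real) \<Rightarrow> nat \<Rightarrow> nat \<Rightarrow> nat \<Rightarrow> (nat \<Rightarrow> real \<Rightarrow> real)
    \<Rightarrow> nat \<Rightarrow> (nat \<Rightarrow> nat \<Rightarrow> real) \<Rightarrow> (nat \<Rightarrow> real) M" where
  "ProcMems rng D Y K s \<tau> \<xi> = do {
     allocM Y;
     forM [0..<K] (\<lambda>\<mu> T. do {
        p \<leftarrow> RF rng D Y s \<tau> (\<xi> \<mu>);
        T' \<leftarrow> forM [0..<Y] (\<lambda>\<alpha> T. do { v \<leftarrow> addM (T \<alpha>) (p \<alpha>); retM (T(\<alpha> := v)) }) T;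
        freeM Y;
        retM T' }) (\<lambda>_. 0) }"

text \<open>The loop "for i: z_i = <d phi/d y_i, T>" is realised by one regeneration
  pass over the features, accumulating all D entries of z simultaneously
  (\<open>d \<phi>\<^sub>\<alpha>/d y\<^sub>i = s' \<alpha> \<langle>\<omega>\<^sup>\<alpha>,y\<rangle> \<omega>\<^sup>\<alpha>\<^sub>i\<close>).  Returns a vector of D reals to be freed by the caller.\<close>
definition GradComp :: "(nat \<Rightarrow> nat \<Rightarrow> real) \<Rightarrow> nat \<Rightarrow> nat \<Rightarrow> (nat \<Rightarrow> real \<Rightarrow> real)
    \<Rightarrow> (nat \<Rightarrow> real \<Rightarrow> real) \<Rightarrow> (real \<Rightarrow> real)
    \<Rightarrow> ((nat \<Rightarrow> real) \<Rightarrow> nat \<Rightarrow> real) \<Rightarrow> ((nat \<Rightarrow> real) \<Rightarrow> nat \<Rightarrow> nat \<Rightarrow> real)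
    \<Rightarrow> nat \<Rightarrow> (nat \<Rightarrow> real) \<Rightarrow> (nat \<Rightarrow> real) \<Rightarrow> (nat \<Rightarrow> real) M" where
  "GradComp rng D Y s s' Q' g Jg \<tau> T x = do {
     allocM D;
     y \<leftarrow> forM [0..<D] (\<lambda>j y. do { v \<leftarrow> gentM g x j; retM (y(j := v)) }) (\<lambda>_. 0);
     p \<leftarrow> RF rng D Y s \<tau> y;
     resetM \<tau>; allocM D; allocM D;
     z \<leftarrow> forM [0..<Y] (\<lambda>\<alpha> z. do {
            w \<leftarrow> sample_vec rng D;
            u \<leftarrow> dotp D w y;
            d \<leftarrow> elemM (s' \<alpha>) u;
            c \<leftarrow> mulM (T \<alpha>) d;
            forM [0..<D] (\<lambda>i z. do { m \<leftarrow> mulM c (w i); v \<leftarrow> addM (z i) m; retM (z(i := v)) }) z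
          }) (\<lambda>_. 0);
     freeM D;
     allocM D;
     z' \<leftarrow> forM [0..<D] (\<lambda>i z'. do {
            v \<leftarrow> forM [0..<D] (\<lambda>j acc. do { J \<leftarrow> jentM Jg x j i; m \<leftarrow> mulM J (z j); addM acc m }) 0;
            retM (z'(i := v)) }) (\<lambda>_. 0);
     e \<leftarrow> dotp Y T p;
     q \<leftarrow> elemM Q' e;
     r \<leftarrow> forM [0..<D] (\<lambda>i r. do { v \<leftarrow> mulM q (z' i); v' \<leftarrow> negM v; retM (r(i := v')) }) z';
     freeM Y; freeM D; freeM D;
     retM r }"

definition drdam :: "(nat \<Rightarrow> nat \<Rightarrow> real) \<Rightarrow> nat \<Rightarrow> nat \<Rightarrow> nat \<Rightarrow> nat
    \<Rightarrow> (nat \<Rightarrow> real \<Rightarrow> real) \<Rightarrow> (nat \<Rightarrow> real \<Rightarrow> real) \<Rightarrow> (real \<Rightarrow> real)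
    \<Rightarrow> ((nat \<Rightarrow> real) \<Rightarrow> nat \<Rightarrow> real) \<Rightarrow> ((nat \<Rightarrow> real) \<Rightarrow> nat \<Rightarrow> nat \<Rightarrow> real)
    \<Rightarrow> nat \<Rightarrow> (nat \<Rightarrow> nat \<Rightarrow> real) \<Rightarrow> (nat \<Rightarrow> real) \<Rightarrow> (nat \<Rightarrow> real) \<Rightarrow> (nat \<Rightarrow> real) M" where
  "drdam rng D Y K L s s' Q' g Jg \<tau> \<xi> \<eta> x0 = do {
     T \<leftarrow> ProcMems rng D Y K s \<tau> \<xi>;
     allocM D;
     forM [0..<L] (\<lambda>t x. do {
        gr \<leftarrow> GradComp rng D Y s s' Q' g Jg \<tau> T x;
        x' \<leftarrow> forM [0..<D] (\<lambda>i x'. do { m \<leftarrow> mulM (\<eta> t) (gr i); v \<leftarrow> subM (x' i) m; retM (x'(i := v)) }) x;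
        freeM D;
        retM x' }) x0 }"

definition omega :: "(nat \<Rightarrow> nat \<Rightarrow> real) \<Rightarrow> nat \<Rightarrow> nat \<Rightarrow> nat \<Rightarrow> nat \<Rightarrow> real" where
  "omega rng \<tau> D \<alpha> i = rng \<tau> (\<alpha> * D + i)"

definition phi :: "(nat \<Rightarrow> nat \<Rightarrow> real) \<Rightarrow> nat \<Rightarrow> nat \<Rightarrow> (nat \<Rightarrow> real \<Rightarrow> real)
    \<Rightarrow> nat \<Rightarrow> (nat \<Rightarrow> real) \<Rightarrow> real" where
  "phi rng \<tau> D s \<alpha> z = s \<alpha> (\<Sum>i<D. omega rng \<tau> D \<alpha> i * z i)"

definition Tmem :: "(nat \<Rightarrow> nat \<Rightarrow> real) \<Rightarrow> nat \<Rightarrow> nat \<Rightarrow> nat \<Rightarrow> (nat \<Rightarrow> real \<Rightarrow> real)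
    \<Rightarrow> (nat \<Rightarrow> nat \<Rightarrow> real) \<Rightarrow> nat \<Rightarrow> real" where
  "Tmem rng \<tau> D K s \<xi> \<alpha> = (\<Sum>\<mu><K. phi rng \<tau> D s \<alpha> (\<xi> \<mu>))"

definition Ehat :: "(nat \<Rightarrow> nat \<Rightarrow> real) \<Rightarrow> nat \<Rightarrow> nat \<Rightarrow> nat \<Rightarrow> nat \<Rightarrow> (nat \<Rightarrow> real \<Rightarrow> real)
    \<Rightarrow> (real \<Rightarrow> real) \<Rightarrow> ((nat \<Rightarrow> real) \<Rightarrow> nat \<Rightarrow> real) \<Rightarrow> (nat \<Rightarrow> nat \<Rightarrow> real) \<Rightarrow> (nat \<Rightarrow> real) \<Rightarrow> real" where
  "Ehat rng \<tau> D Y K s Q g \<xi> x =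
     - Q (\<Sum>\<alpha><Y. Tmem rng \<tau> D K s \<xi> \<alpha> * phi rng \<tau> D s \<alpha> (g x))"

text \<open>The i-th entry of the gradient formula from the context
  (\<open>Jg x j i\<close> = \<open>\<partial>g_j/\<partial>x_i\<close>).\<close>
definition gradEhat :: "(nat \<Rightarrow> nat \<Rightarrow> real) \<Rightarrow> nat \<Rightarrow> nat \<Rightarrow> nat \<Rightarrow> nat
    \<Rightarrow> (nat \<Rightarrow> real \<Rightarrow> real) \<Rightarrow> (nat \<Rightarrow> real \<Rightarrow> real) \<Rightarrow> (real \<Rightarrow> real)
    \<Rightarrow> ((nat \<Rightarrow> real) \<Rightarrow> nat \<Rightarrow> real) \<Rightarrow> ((nat \<Rightarrow> real) \<Rightarrow> nat \<Rightarrow> nat \<Rightarrow> real)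
    \<Rightarrow> (nat \<Rightarrow> nat \<Rightarrow> real) \<Rightarrow> (nat \<Rightarrow> real) \<Rightarrow> nat \<Rightarrow> real" where
  "gradEhat rng \<tau> D Y K s s' Q' g Jg \<xi> x i =
     (let T = Tmem rng \<tau> D K s \<xi>; y = g x in
      - Q' (\<Sum>\<alpha><Y. T \<alpha> * phi rng \<tau> D s \<alpha> y) *
        (\<Sum>j<D. Jg x j i *
           (\<Sum>\<alpha><Y. s' \<alpha> (\<Sum>k<D. omega rng \<tau> D \<alpha> k * y k) * omega rng \<tau> D \<alpha> j * T \<alpha>)))"

primrec gd_iter :: "(nat \<Rightarrow> nat \<Rightarrow> real) \<Rightarrow> nat \<Rightarrow> nat \<Rightarrow> nat \<Rightarrow> nat
    \<Rightarrow> (nat \<Rightarrow> real \<Rightarrow> real) \<Rightarrow> (nat \<Rightarrow> real \<Rightarrow> real) \<Rightarrow> (real \<Rightarrow> real)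
    \<Rightarrow> ((nat \<Rightarrow> real) \<Rightarrow> nat \<Rightarrow> real) \<Rightarrow> ((nat \<Rightarrow> real) \<Rightarrow> nat \<Rightarrow> nat \<Rightarrow> real)
    \<Rightarrow> (nat \<Rightarrow> nat \<Rightarrow> real) \<Rightarrow> (nat \<Rightarrow> real) \<Rightarrow> (nat \<Rightarrow> real) \<Rightarrow> nat \<Rightarrow> (nat \<Rightarrow> real)" where
  "gd_iter rng \<tau> D Y K s s' Q' g Jg \<xi> \<eta> x0 0 = x0"
| "gd_iter rng \<tau> D Y K s s' Q' g Jg \<xi> \<eta> x0 (Suc t) =
     (let x = gd_iter rng \<tau> D Y K s s' Q' g Jg \<xi> \<eta> x0 t in
      (\<lambda>i. if i < D then x i - \<eta> t * gradEhat rng \<tau> D Y K s s' Q' g Jg \<xi> x i else x i))"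

end

theory Submission
  imports Defs
begin

text \<open>Every routine is a deterministic state transformer, so it can be executed symbolically
  to a closed form: its return value together with its final time, live memory, peak memory and
  generator state. Since RF and GradComp reset the generator to \<open>\<tau>\<close> before producing the
  features, feature \<open>\<alpha>\<close> always reads the stream positions \<open>\<alpha>D, \<dots>, \<alpha>D + D - 1\<close>, that is, the
  same projection vector \<open>omega \<alpha>\<close>. Hence ProcMems returns the memory vector Tmem, every call
  of GradComp returns gradEhat, and the iterates are exactly those of gd_iter. The closed-form
  costs are \<open>Y + K(1 + D + 3Y + 3DY)\<close> for ProcMems and \<open>3 + 10D + 6Y + 8DY + 3D\<^sup>2\<close> per
  descent step, with at most \<open>2Y + 4D\<close> reals live at once; for \<open>D, Y, K, L \<ge> 1\<close> these are
  within a factor 30 of the claimed bounds.\<close>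

lemma bindM_apply: "bindM m f s = (case m s of (a, s') \<Rightarrow> f a s')"
  by (simp add: bindM_def)

lemma retM_apply: "retM a s = (a, s)"
  by (simp add: retM_def)

lemma bindM_retM [simp]: "bindM m retM = m"
  by (simp add: fun_eq_iff bindM_apply retM_apply split: prod.split)

lemma bindM_assoc: "bindM (bindM m f) h = bindM m (\<lambda>a. bindM (f a) h)"
  by (simp add: fun_eq_iff bindM_apply split: prod.split)

lemma primitive_apply:
  "addM a b s = (a + b, s\<lparr>tm := tm s + 1\<rparr>)"
  "subM a b s = (a - b, s\<lparr>tm := tm s + 1\<rparr>)"
  "mulM a b s = (a * b, s\<lparr>tm := tm s + 1\<rparr>)"
  "negM a s = (- a, s\<lparr>tm := tm s + 1\<rparr>)"
  "elemM f t s = (f t, s\<lparr>tm := tm s + 1\<rparr>)"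
  "gentM g x j s = (g x j, s\<lparr>tm := tm s + 1\<rparr>)"
  "jentM Jg x j i s = (Jg x j i, s\<lparr>tm := tm s + 1\<rparr>)"
  "sampleM rng s = (rng (seed s) (pos s), s\<lparr>tm := tm s + 1, pos := pos s + 1\<rparr>)"
  "resetM \<tau> s = ((), s\<lparr>tm := tm s + 1, seed := \<tau>, pos := 0\<rparr>)"
  "allocM n s = ((), s\<lparr>tm := tm s + n, live := live s + n, peak := max (peak s) (live s + n)\<rparr>)"
  "freeM n s = ((), s\<lparr>live := live s - n\<rparr>)"
  by (simp_all add: addM_def subM_def mulM_def negM_def elemM_def gentM_def jentM_def
      sampleM_def resetM_def allocM_def freeM_def tick_def)

lemma forM_append: "forM (xs @ ys) f a = bindM (forM xs f a) (forM ys f)"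
  by (induction xs arbitrary: a) (simp_all add: bindM_assoc fun_eq_iff bindM_apply retM_apply)

lemma forM_upt_Suc: "forM [0..<Suc n] f a s = (case forM [0..<n] f a s of (b, s') \<Rightarrow> f n b s')"
  by (simp add: forM_append bindM_apply retM_apply split: prod.split)

lemma forM_upt_const_step:
  assumes "V 0 = a"
    and "\<And>i. i < n \<Longrightarrow> f i (V i) (s\<lparr>tm := tm s + i * c, pos := pos s + i * d\<rparr>)
           = (V (Suc i), s\<lparr>tm := tm s + Suc i * c, pos := pos s + Suc i * d\<rparr>)"
  shows "forM [0..<n] f a s = (V n, s\<lparr>tm := tm s + n * c, pos := pos s + n * d\<rparr>)"
  using assms(2)
proof (induction n)
  case 0
  show ?case using assms(1) by (simp add: retM_apply)
next
  case (Suc n)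
  then show ?case by (simp del: upt_Suc add: forM_upt_Suc)
qed

lemma forM_upt_const_time:
  assumes "V 0 = a" and "\<And>i s. i < n \<Longrightarrow> f i (V i) s = (V (Suc i), s\<lparr>tm := tm s + c\<rparr>)"
  shows "forM [0..<n] f a s = (V n, s\<lparr>tm := tm s + n * c\<rparr>)"
  using forM_upt_const_step[where V=V and d=0] assms by (simp add: algebra_simps)

lemma forM_upt_resetting:
  assumes "V 0 = a"
    and "\<And>i s. i < n \<Longrightarrow> f i (V i) s
           = (V (Suc i), s\<lparr>tm := tm s + c, peak := max (peak s) (live s + m), seed := \<tau>, pos := p\<rparr>)"
  shows "forM [0..<n] f a s = (V n, if n = 0 then s
           else s\<lparr>tm := tm s + n * c, peak := max (peak s) (live s + m), seed := \<tau>, pos := p\<rparr>)"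
  using assms(2)
proof (induction n)
  case 0
  show ?case using assms(1) by (simp add: retM_apply)
next
  case (Suc n)
  then show ?case by (cases n) (simp_all del: upt_Suc add: forM_upt_Suc max.assoc algebra_simps)
qed

lemma sample_vec_eq:
  "sample_vec rng D s = ((\<lambda>i. if i < D then rng (seed s) (pos s + i) else 0),
     s\<lparr>tm := tm s + D, pos := pos s + D\<rparr>)"
  unfolding sample_vec_def
  by (subst forM_upt_const_step[where V="\<lambda>n i. if i < n then rng (seed s) (pos s + i) else 0"
        and c=1 and d=1])
     (auto simp: bindM_apply retM_apply primitive_apply fun_eq_iff)

lemma dotp_eq: "dotp n a b s = ((\<Sum>i<n. a i * b i), s\<lparr>tm := tm s + 2 * n\<rparr>)"
  unfolding dotp_def
  by (subst forM_upt_const_time[where V="\<lambda>m. \<Sum>i<m. a i * b i" and c=2])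
     (simp_all add: bindM_apply retM_apply primitive_apply)

lemma RF_features_loop:
  "forM [0..<n] (\<lambda>\<alpha> p. do {
       w \<leftarrow> sample_vec rng D;
       u \<leftarrow> dotp D w \<xi>;
       v \<leftarrow> elemM (s \<alpha>) u;
       retM (p(\<alpha> := v)) }) p0 st =
   ((\<lambda>\<alpha>. if \<alpha> < n then s \<alpha> (\<Sum>k<D. rng (seed st) (pos st + \<alpha> * D + k) * \<xi> k) else p0 \<alpha>),
    st\<lparr>tm := tm st + n * (3 * D + 1), pos := pos st + n * D\<rparr>)"
  by (subst forM_upt_const_step[where
        V="\<lambda>n \<alpha>. if \<alpha> < n then s \<alpha> (\<Sum>k<D. rng (seed st) (pos st + \<alpha> * D + k) * \<xi> k) else p0 \<alpha>"
        and c="3 * D + 1" and d=D])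
     (auto simp: bindM_apply retM_apply primitive_apply sample_vec_eq dotp_eq fun_eq_iff add.assoc)

lemma RF_eq:
  "RF rng D Y s \<tau> \<xi> st = ((\<lambda>\<alpha>. if \<alpha> < Y then phi rng \<tau> D s \<alpha> \<xi> else 0),
     st\<lparr>tm := tm st + (1 + D + 2 * Y + 3 * D * Y), live := live st + Y,
        peak := max (peak st) (live st + Y + D), seed := \<tau>, pos := Y * D\<rparr>)"
  unfolding RF_def
  by (simp add: bindM_apply retM_apply primitive_apply RF_features_loop phi_def omega_def
      fun_eq_iff algebra_simps)

lemma accumulate_loop:
  "forM [0..<n] (\<lambda>\<alpha> T. do { v \<leftarrow> addM (T \<alpha>) (p \<alpha>); retM (T(\<alpha> := v)) }) T st =
   ((\<lambda>\<alpha>. if \<alpha> < n then T \<alpha> + p \<alpha> else T \<alpha>), st\<lparr>tm := tm st + n\<rparr>)"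
  by (subst forM_upt_const_time[where V="\<lambda>n \<alpha>. if \<alpha> < n then T \<alpha> + p \<alpha> else T \<alpha>" and c=1])
     (auto simp: bindM_apply retM_apply primitive_apply fun_eq_iff)

lemma ProcMems_step:
  "(do {
      p \<leftarrow> RF rng D Y s \<tau> (\<xi> \<mu>);
      T' \<leftarrow> forM [0..<Y] (\<lambda>\<alpha> T. do { v \<leftarrow> addM (T \<alpha>) (p \<alpha>); retM (T(\<alpha> := v)) }) T;
      freeM Y;
      retM T' }) st =
   ((\<lambda>\<alpha>. if \<alpha> < Y then T \<alpha> + phi rng \<tau> D s \<alpha> (\<xi> \<mu>) else T \<alpha>),
    st\<lparr>tm := tm st + (1 + D + 3 * Y + 3 * D * Y),
       peak := max (peak st) (live st + Y + D), seed := \<tau>, pos := Y * D\<rparr>)"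
  by (simp add: bindM_apply retM_apply primitive_apply RF_eq accumulate_loop fun_eq_iff)

lemma ProcMems_eq:
  assumes "1 \<le> K"
  shows "ProcMems rng D Y K s \<tau> \<xi> st = ((\<lambda>\<alpha>. if \<alpha> < Y then Tmem rng \<tau> D K s \<xi> \<alpha> else 0),
    st\<lparr>tm := tm st + Y + K * (1 + D + 3 * Y + 3 * D * Y), live := live st + Y,
       peak := max (peak st) (live st + 2 * Y + D), seed := \<tau>, pos := Y * D\<rparr>)"
  unfolding ProcMems_def Tmem_def
  apply (simp add: bindM_apply primitive_apply)
  apply (subst forM_upt_resetting[where V="\<lambda>n \<alpha>. if \<alpha> < Y then (\<Sum>\<mu><n. phi rng \<tau> D s \<alpha> (\<xi> \<mu>)) else 0"
        and c="1 + D + 3 * Y + 3 * D * Y" and m="Y + D" and p="Y * D"])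
  using assms by (auto simp: ProcMems_step fun_eq_iff algebra_simps max_def)

lemma gentM_loop:
  "forM [0..<n] (\<lambda>j y. do { v \<leftarrow> gentM g x j; retM (y(j := v)) }) y0 st =
   ((\<lambda>j. if j < n then g x j else y0 j), st\<lparr>tm := tm st + n\<rparr>)"
  by (subst forM_upt_const_time[where V="\<lambda>n j. if j < n then g x j else y0 j" and c=1])
     (auto simp: bindM_apply retM_apply primitive_apply fun_eq_iff)

lemma axpy_loop:
  "forM [0..<n] (\<lambda>i z. do { m \<leftarrow> mulM c (w i); v \<leftarrow> addM (z i) m; retM (z(i := v)) }) z st =
   ((\<lambda>i. if i < n then z i + c * w i else z i), st\<lparr>tm := tm st + 2 * n\<rparr>)"
  by (subst forM_upt_const_time[where V="\<lambda>n i. if i < n then z i + c * w i else z i" and c=2])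
     (auto simp: bindM_apply retM_apply primitive_apply fun_eq_iff)

lemma GradComp_features_loop:
  "forM [0..<n] (\<lambda>\<alpha> z. do {
       w \<leftarrow> sample_vec rng D;
       u \<leftarrow> dotp D w y;
       d \<leftarrow> elemM (s' \<alpha>) u;
       c \<leftarrow> mulM (T \<alpha>) d;
       forM [0..<D] (\<lambda>i z. do { m \<leftarrow> mulM c (w i); v \<leftarrow> addM (z i) m; retM (z(i := v)) }) z
     }) z0 st =
   ((\<lambda>i. if i < D then z0 i + (\<Sum>\<alpha><n. T \<alpha> * s' \<alpha> (\<Sum>k<D. rng (seed st) (pos st + \<alpha> * D + k) * y k)
                                     * rng (seed st) (pos st + \<alpha> * D + i))
         else z0 i),
    st\<lparr>tm := tm st + n * (5 * D + 2), pos := pos st + n * D\<rparr>)"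
  by (subst forM_upt_const_step[where V="\<lambda>n i. if i < D
          then z0 i + (\<Sum>\<alpha><n. T \<alpha> * s' \<alpha> (\<Sum>k<D. rng (seed st) (pos st + \<alpha> * D + k) * y k)
                                   * rng (seed st) (pos st + \<alpha> * D + i))
          else z0 i" and c="5 * D + 2" and d=D])
     (auto simp: bindM_apply retM_apply primitive_apply sample_vec_eq dotp_eq axpy_loop fun_eq_iff
        algebra_simps)

lemma jacobian_column_loop:
  "forM [0..<n] (\<lambda>j acc. do { J \<leftarrow> jentM Jg x j i; m \<leftarrow> mulM J (z j); addM acc m }) a st =
   (a + (\<Sum>j<n. Jg x j i * z j), st\<lparr>tm := tm st + 3 * n\<rparr>)"
  by (subst forM_upt_const_time[where V="\<lambda>n. a + (\<Sum>j<n. Jg x j i * z j)" and c=3])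
     (auto simp: bindM_apply retM_apply primitive_apply)

lemma jacobian_loop:
  "forM [0..<n] (\<lambda>i z'. do {
       v \<leftarrow> forM [0..<D] (\<lambda>j acc. do { J \<leftarrow> jentM Jg x j i; m \<leftarrow> mulM J (z j); addM acc m }) 0;
       retM (z'(i := v)) }) z0 st =
   ((\<lambda>i. if i < n then (\<Sum>j<D. Jg x j i * z j) else z0 i), st\<lparr>tm := tm st + 3 * D * n\<rparr>)"
  by (subst forM_upt_const_time[where V="\<lambda>n i. if i < n then (\<Sum>j<D. Jg x j i * z j) else z0 i"
        and c="3 * D"])
     (auto simp: bindM_apply retM_apply jacobian_column_loop fun_eq_iff)

lemma negated_scaling_loop:
  "forM [0..<n] (\<lambda>i r. do { v \<leftarrow> mulM q (z' i); v' \<leftarrow> negM v; retM (r(i := v')) }) r0 st =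
   ((\<lambda>i. if i < n then - (q * z' i) else r0 i), st\<lparr>tm := tm st + 2 * n\<rparr>)"
  by (subst forM_upt_const_time[where V="\<lambda>n i. if i < n then - (q * z' i) else r0 i" and c=2])
     (auto simp: bindM_apply retM_apply primitive_apply fun_eq_iff)

lemma GradComp_eq:
  "GradComp rng D Y s s' Q' g Jg \<tau> T x st =
   ((\<lambda>i. if i < D then
        - Q' (\<Sum>\<alpha><Y. T \<alpha> * phi rng \<tau> D s \<alpha> (g x)) *
          (\<Sum>j<D. Jg x j i * (\<Sum>\<alpha><Y. s' \<alpha> (\<Sum>k<D. omega rng \<tau> D \<alpha> k * g x k) * omega rng \<tau> D \<alpha> j * T \<alpha>))
      else 0),
    st\<lparr>tm := tm st + (3 + 8 * D + 6 * Y + 8 * D * Y + 3 * D * D), live := live st + D,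
       peak := max (peak st) (live st + Y + 3 * D), seed := \<tau>, pos := Y * D\<rparr>)"
  unfolding GradComp_def
  by (simp add: bindM_apply retM_apply primitive_apply gentM_loop RF_eq GradComp_features_loop
      jacobian_loop dotp_eq negated_scaling_loop phi_def omega_def fun_eq_iff algebra_simps)

lemma descent_update_loop:
  "forM [0..<n] (\<lambda>i x'. do { m \<leftarrow> mulM e (gr i); v \<leftarrow> subM (x' i) m; retM (x'(i := v)) }) x0 st =
   ((\<lambda>i. if i < n then x0 i - e * gr i else x0 i), st\<lparr>tm := tm st + 2 * n\<rparr>)"
  by (subst forM_upt_const_time[where V="\<lambda>n i. if i < n then x0 i - e * gr i else x0 i" and c=2])
     (auto simp: bindM_apply retM_apply primitive_apply fun_eq_iff)

lemma gradEhat_conv_memory: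
  assumes "\<And>\<alpha>. \<alpha> < Y \<Longrightarrow> T \<alpha> = Tmem rng \<tau> D K s \<xi> \<alpha>"
  shows "gradEhat rng \<tau> D Y K s s' Q' g Jg \<xi> x i =
    - Q' (\<Sum>\<alpha><Y. T \<alpha> * phi rng \<tau> D s \<alpha> (g x)) *
      (\<Sum>j<D. Jg x j i * (\<Sum>\<alpha><Y. s' \<alpha> (\<Sum>k<D. omega rng \<tau> D \<alpha> k * g x k) * omega rng \<tau> D \<alpha> j * T \<alpha>))"
  using assms by (simp add: gradEhat_def Let_def)

lemma drdam_descent_step:
  assumes "\<And>\<alpha>. \<alpha> < Y \<Longrightarrow> T \<alpha> = Tmem rng \<tau> D K s \<xi> \<alpha>"
  shows "(do {
      gr \<leftarrow> GradComp rng D Y s s' Q' g Jg \<tau> T x;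
      x' \<leftarrow> forM [0..<D] (\<lambda>i x'. do { m \<leftarrow> mulM (\<eta> t) (gr i); v \<leftarrow> subM (x' i) m; retM (x'(i := v)) }) x;
      freeM D;
      retM x' }) st =
    ((\<lambda>i. if i < D then x i - \<eta> t * gradEhat rng \<tau> D Y K s s' Q' g Jg \<xi> x i else x i),
     st\<lparr>tm := tm st + (3 + 10 * D + 6 * Y + 8 * D * Y + 3 * D * D),
        peak := max (peak st) (live st + Y + 3 * D), seed := \<tau>, pos := Y * D\<rparr>)"
  by (simp add: bindM_apply retM_apply primitive_apply GradComp_eq descent_update_loop
      gradEhat_conv_memory[OF assms] fun_eq_iff)

definition drdam_time :: "nat \<Rightarrow> nat \<Rightarrow> nat \<Rightarrow> nat \<Rightarrow> nat" where
  "drdam_time D Y K L =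
     Y + K * (1 + D + 3 * Y + 3 * D * Y) + D + L * (3 + 10 * D + 6 * Y + 8 * D * Y + 3 * D * D)"

lemma drdam_eq:
  assumes "1 \<le> K" and "1 \<le> L"
  shows "drdam rng D Y K L s s' Q' g Jg \<tau> \<xi> \<eta> x0 init_st =
    (gd_iter rng \<tau> D Y K s s' Q' g Jg \<xi> \<eta> x0 L,
     \<lparr>tm = drdam_time D Y K L, live = Y + D, peak = 2 * Y + 4 * D, seed = \<tau>, pos = Y * D\<rparr>)"
  unfolding drdam_def
  apply (simp add: bindM_apply primitive_apply ProcMems_eq[OF assms(1)])
  apply (subst forM_upt_resetting[where V="gd_iter rng \<tau> D Y K s s' Q' g Jg \<xi> \<eta> x0"
        and c="3 + 10 * D + 6 * Y + 8 * D * Y + 3 * D * D" and m="Y + 3 * D" and p="Y * D"])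
  using assms by (auto simp: drdam_descent_step Let_def init_st_def drdam_time_def max_def)

lemma drdam_time_le:
  fixes D Y K L :: nat
  assumes "1 \<le> D" "1 \<le> Y" "1 \<le> K" "1 \<le> L"
  shows "drdam_time D Y K L \<le> 30 * (D * (Y * K + L * (Y + D)))"
proof -
  have monomials: "Y \<le> D * Y * K" "D \<le> D * Y * K" "K \<le> D * Y * K" "K * Y \<le> D * Y * K"
      "K * D \<le> D * Y * K" "L \<le> L * D * Y" "L * D \<le> L * D * Y" "L * Y \<le> L * D * Y"
    using assms by (simp_all add: mult_le_mono)
  have "drdam_time D Y K L = Y + K + 3 * (K * Y) + K * D + 3 * (D * Y * K) + D
        + 3 * L + 10 * (L * D) + 6 * (L * Y) + 8 * (L * D * Y) + 3 * (L * D * D)"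
    by (simp add: drdam_time_def algebra_simps)
  moreover have "30 * (D * (Y * K + L * (Y + D))) = 30 * (D * Y * K) + 30 * (L * D * Y) + 30 * (L * D * D)"
    by (simp add: algebra_simps)
  ultimately show ?thesis
    using monomials by linarith
qed

theorem theorem1:
  "\<exists>c::nat. \<forall>(D::nat) (Y::nat) (K::nat) (L::nat) (rng::nat \<Rightarrow> nat \<Rightarrow> real) (\<tau>::nat)
      (s::nat \<Rightarrow> real \<Rightarrow> real) (s'::nat \<Rightarrow> real \<Rightarrow> real) (Q::real \<Rightarrow> real) (Q'::real \<Rightarrow> real)
      (g::(nat \<Rightarrow> real) \<Rightarrow> nat \<Rightarrow> real) (Jg::(nat \<Rightarrow> real) \<Rightarrow> nat \<Rightarrow> nat \<Rightarrow> real)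
      (\<xi>::nat \<Rightarrow> nat \<Rightarrow> real) (\<eta>::nat \<Rightarrow> real) (x0::nat \<Rightarrow> real).
     1 \<le> D \<and> 1 \<le> Y \<and> 1 \<le> K \<and> 1 \<le> L
     \<and> (\<forall>\<alpha> t. (s \<alpha> has_real_derivative s' \<alpha> t) (at t))
     \<and> (\<forall>t. (Q has_real_derivative Q' t) (at t))
     \<and> (\<forall>x j i. j < D \<longrightarrow> i < D \<longrightarrow>
          ((\<lambda>h. g (x(i := x i + h)) j) has_real_derivative Jg x j i) (at 0))
     \<and> (\<forall>t. \<eta> t > 0)
     \<longrightarrow> (let (xL, st) = drdam rng D Y K L s s' Q' g Jg \<tau> \<xi> \<eta> x0 init_st in
           xL = gd_iter rng \<tau> D Y K s s' Q' g Jg \<xi> \<eta> x0 L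
           \<and> tm st \<le> c * (D * (Y * K + L * (Y + D)))
           \<and> peak st \<le> c * (Y + D))"
  \<comment> \<open>The differentiability hypotheses only justify reading gradEhat as the gradient of Ehat;
    the analysis of the algorithm does not use them, nor the positivity of the step sizes.\<close>
  by (intro exI[of _ 30] allI impI) (simp add: drdam_eq drdam_time_le)

end
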